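(* Let $\mathcal{C}_1,\mathcal{C}_2$ be symmetric monoidal anti-involutive categories and let $P_1$ be a monoidal positivity structure on $\mathcal{C}_1$. Let $\zeta\colon G_1\Rightarrow G_2$ be a monoidal anti-involutive natural isomorphism between symmetric monoidal anti-involutive functors $G_1,G_2\colon\mathcal{C}_1\to\mathcal{C}_2$. Then $G_1(P_1)=G_2(P_1)$ after taking closures under transfer.
   Context: Symmetric monoidal anti-involutive category $(\mathcal{C},d,\eta)$: symmetric monoidal category, symmetric monoidal functor $d\colon\mathcal{C}\to\mathcal{C}^{\mathrm{op}}$, monoidal natural isomorphism $\eta\colon\mathrm{id}\Rightarrow d^2$ with $d(\eta_x)\circ\eta_{dx}=\mathrm{id}$. A symmetric monoidal anti-involutive functor $(G,\phi)$: symmetric monoidal functor with monoidal natural isomorphism $\phi\colon G\circ d\Rightarrow d\circ G$ with $\phi_{dx}\circ G(\eta_x)=d(\phi_x)\circ\eta_{G(x)}$. An anti-involutive natural transformation $\zeta\colon(G_1,\phi_1)\Rightarrow(G_2,\phi_2)$ satisfies $(\phi_1)_x=d(\zeta_x)\circ(\phi_2)_x\circ\zeta_{dx}$. A Hermitian pairing is an isomorphism $h\colon c\to dc$ with $d(h)\circ\eta_c=h$. A (monoidal) positivity structure is a collection of Hermitian pairings $(c,h)$ surjecting onto objects of $\mathcal{C}$ (closed under tensor product $(c_1\otimes c_2,\chi\circ(h_1\otimes h_2))$, $\chi$ the monoidal structure of $d$). The transfer of $h$ along an isomorphism $g\colon c'\to c$ is $d(g)\circ h\circ g$; the closure of a collection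 is its closure under transfer. For $(G,\phi)$ and a collection $P$, $G(P)$ is the collection of Hermitian pairings $\phi_c\circ G(h)\colon G(c)\to dG(c)$ for $(c,h)\in P$. *)

theory Defs
  imports Main
begin

record ('o,'m) cat =
  Obj :: "'o set"
  Arr :: "'m set"
  Src :: "'m \<Rightarrow> 'o"
  Tgt :: "'m \<Rightarrow> 'o"
  Cmp :: "'m \<Rightarrow> 'm \<Rightarrow> 'm"   (* Cmp C g f = g \<circ> f *)
  Idt :: "'o \<Rightarrow> 'm"

definition hom :: "('o,'m,'z) cat_scheme \<Rightarrow> 'o \<Rightarrow> 'o \<Rightarrow> 'm set" where
  "hom C x y = {f \<in> Arr C. Src C f = x \<and> Tgt C f = y}"

definition category :: "('o,'m,'z) cat_scheme \<Rightarrow> bool" where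
  "category C \<longleftrightarrow>
     (\<forall>f\<in>Arr C. Src C f \<in> Obj C \<and> Tgt C f \<in> Obj C) \<and>
     (\<forall>x\<in>Obj C. Idt C x \<in> hom C x x) \<and>
     (\<forall>f g. f \<in> Arr C \<and> g \<in> Arr C \<and> Tgt C f = Src C g \<longrightarrow>
            Cmp C g f \<in> hom C (Src C f) (Tgt C g)) \<and>
     (\<forall>f\<in>Arr C. Cmp C f (Idt C (Src C f)) = f \<and> Cmp C (Idt C (Tgt C f)) f = f) \<and>
     (\<forall>f g h. f \<in> Arr C \<and> g \<in> Arr C \<and> h \<in> Arr C \<and> Tgt C f = Src C g \<and> Tgt C g = Src C h
            \<longrightarrow> Cmp C h (Cmp C g f) = Cmp C (Cmp C h g) f)"

definition is_inverse :: "('o,'m,'z) cat_scheme \<Rightarrow> 'm \<Rightarrow> 'm \<Rightarrow> bool" where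
  "is_inverse C f g \<longleftrightarrow> g \<in> hom C (Tgt C f) (Src C f) \<and>
     Cmp C g f = Idt C (Src C f) \<and> Cmp C f g = Idt C (Tgt C f)"

definition iso :: "('o,'m,'z) cat_scheme \<Rightarrow> 'm \<Rightarrow> bool" where
  "iso C f \<longleftrightarrow> f \<in> Arr C \<and> (\<exists>g. is_inverse C f g)"

definition inv_ar :: "('o,'m,'z) cat_scheme \<Rightarrow> 'm \<Rightarrow> 'm" where
  "inv_ar C f = (THE g. is_inverse C f g)"

text \<open>Conventions: Asc x y z : (x*y)*z -> x*(y*z); LU x : I*x -> x; RU x : x*I -> x;
  Brd x y : x*y -> y*x.\<close>

record ('o,'m) smc = "('o,'m) cat" +
  Ten  :: "'o \<Rightarrow> 'o \<Rightarrow> 'o"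
  TenA :: "'m \<Rightarrow> 'm \<Rightarrow> 'm"
  Unt   :: "'o"
  Asc  :: "'o \<Rightarrow> 'o \<Rightarrow> 'o \<Rightarrow> 'm"
  LU   :: "'o \<Rightarrow> 'm"
  RU   :: "'o \<Rightarrow> 'm"
  Brd  :: "'o \<Rightarrow> 'o \<Rightarrow> 'm"

definition sym_monoidal_cat :: "('o,'m) smc \<Rightarrow> bool" where
  "sym_monoidal_cat C \<longleftrightarrow> category C \<and>
    Unt C \<in> Obj C \<and>
    (\<forall>x\<in>Obj C. \<forall>y\<in>Obj C. Ten C x y \<in> Obj C) \<and>
    (\<forall>x y x' y' f g. f \<in> hom C x y \<and> g \<in> hom C x' y' \<longrightarrow>
        TenA C f g \<in> hom C (Ten C x x') (Ten C y y')) \<and>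
    (\<forall>x\<in>Obj C. \<forall>y\<in>Obj C. TenA C (Idt C x) (Idt C y) = Idt C (Ten C x y)) \<and>
    (\<forall>f g f' g'. f \<in> Arr C \<and> g \<in> Arr C \<and> f' \<in> Arr C \<and> g' \<in> Arr C \<and>
        Tgt C f = Src C g \<and> Tgt C f' = Src C g' \<longrightarrow>
        TenA C (Cmp C g f) (Cmp C g' f') = Cmp C (TenA C g g') (TenA C f f')) \<and>
    (\<forall>x\<in>Obj C. \<forall>y\<in>Obj C. \<forall>z\<in>Obj C.
        Asc C x y z \<in> hom C (Ten C (Ten C x y) z) (Ten C x (Ten C y z)) \<and> iso C (Asc C x y z)) \<and>
    (\<forall>x x' y y' z z' f g h. f \<in> hom C x x' \<and> g \<in> hom C y y' \<and> h \<in> hom C z z' \<longrightarrow>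
        Cmp C (Asc C x' y' z') (TenA C (TenA C f g) h) =
        Cmp C (TenA C f (TenA C g h)) (Asc C x y z)) \<and>
    (\<forall>x\<in>Obj C. LU C x \<in> hom C (Ten C (Unt C) x) x \<and> iso C (LU C x) \<and>
                RU C x \<in> hom C (Ten C x (Unt C)) x \<and> iso C (RU C x)) \<and>
    (\<forall>x y f. f \<in> hom C x y \<longrightarrow>
        Cmp C f (LU C x) = Cmp C (LU C y) (TenA C (Idt C (Unt C)) f) \<and>
        Cmp C f (RU C x) = Cmp C (RU C y) (TenA C f (Idt C (Unt C)))) \<and>
    (\<forall>x\<in>Obj C. \<forall>y\<in>Obj C. Brd C x y \<in> hom C (Ten C x y) (Ten C y x) \<and> iso C (Brd C x y)) \<and>
    (\<forall>x x' y y' f g. f \<in> hom C x x' \<and> g \<in> hom C y y' \<longrightarrow>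
        Cmp C (TenA C g f) (Brd C x y) = Cmp C (Brd C x' y') (TenA C f g)) \<and>
    (\<forall>w\<in>Obj C. \<forall>x\<in>Obj C. \<forall>y\<in>Obj C. \<forall>z\<in>Obj C.
        Cmp C (TenA C (Idt C w) (Asc C x y z))
          (Cmp C (Asc C w (Ten C x y) z) (TenA C (Asc C w x y) (Idt C z))) =
        Cmp C (Asc C w x (Ten C y z)) (Asc C (Ten C w x) y z)) \<and>
    (\<forall>x\<in>Obj C. \<forall>y\<in>Obj C.
        Cmp C (TenA C (Idt C x) (LU C y)) (Asc C x (Unt C) y) = TenA C (RU C x) (Idt C y)) \<and>
    (\<forall>x\<in>Obj C. \<forall>y\<in>Obj C. \<forall>z\<in>Obj C.
        Cmp C (Asc C y z x) (Cmp C (Brd C x (Ten C y z)) (Asc C x y z)) =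
        Cmp C (TenA C (Idt C y) (Brd C x z)) (Cmp C (Asc C y x z) (TenA C (Brd C x y) (Idt C z)))) \<and>
    (\<forall>x\<in>Obj C. \<forall>y\<in>Obj C. Cmp C (Brd C y x) (Brd C x y) = Idt C (Ten C x y))"

definition op_smc :: "('o,'m) smc \<Rightarrow> ('o,'m) smc" where
  "op_smc C = C\<lparr> Src := Tgt C, Tgt := Src C, Cmp := (\<lambda>g f. Cmp C f g),
      Asc := (\<lambda>x y z. inv_ar C (Asc C x y z)),
      LU := (\<lambda>x. inv_ar C (LU C x)), RU := (\<lambda>x. inv_ar C (RU C x)),
      Brd := (\<lambda>x y. inv_ar C (Brd C x y)) \<rparr>"

text \<open>Structure maps Mu x y : F(x*y) -> F x * F y and Eps : F I -> I (strong, i.e. invertible).\<close>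

record ('a,'b,'c,'d) mfun =
  FO  :: "'a \<Rightarrow> 'c"
  FA  :: "'b \<Rightarrow> 'd"
  Mu  :: "'a \<Rightarrow> 'a \<Rightarrow> 'd"
  Eps :: "'d"

definition is_functor :: "('a,'b) smc \<Rightarrow> ('c,'d) smc \<Rightarrow> ('a,'b,'c,'d) mfun \<Rightarrow> bool" where
  "is_functor C D F \<longleftrightarrow>
    (\<forall>x\<in>Obj C. FO F x \<in> Obj D) \<and>
    (\<forall>x y f. f \<in> hom C x y \<longrightarrow> FA F f \<in> hom D (FO F x) (FO F y)) \<and>
    (\<forall>x\<in>Obj C. FA F (Idt C x) = Idt D (FO F x)) \<and>
    (\<forall>f g. f \<in> Arr C \<and> g \<in> Arr C \<and> Tgt C f = Src C g \<longrightarrow>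
        FA F (Cmp C g f) = Cmp D (FA F g) (FA F f))"

definition sym_monoidal_functor :: "('a,'b) smc \<Rightarrow> ('c,'d) smc \<Rightarrow> ('a,'b,'c,'d) mfun \<Rightarrow> bool" where
  "sym_monoidal_functor C D F \<longleftrightarrow> is_functor C D F \<and>
    (\<forall>x\<in>Obj C. \<forall>y\<in>Obj C.
       Mu F x y \<in> hom D (FO F (Ten C x y)) (Ten D (FO F x) (FO F y)) \<and> iso D (Mu F x y)) \<and>
    Eps F \<in> hom D (FO F (Unt C)) (Unt D) \<and> iso D (Eps F) \<and>
    (\<forall>x x' y y' f g. f \<in> hom C x x' \<and> g \<in> hom C y y' \<longrightarrow>
       Cmp D (TenA D (FA F f) (FA F g)) (Mu F x y) = Cmp D (Mu F x' y') (FA F (TenA C f g))) \<and>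
    (\<forall>x\<in>Obj C. \<forall>y\<in>Obj C. \<forall>z\<in>Obj C.
       Cmp D (Asc D (FO F x) (FO F y) (FO F z))
         (Cmp D (TenA D (Mu F x y) (Idt D (FO F z))) (Mu F (Ten C x y) z)) =
       Cmp D (TenA D (Idt D (FO F x)) (Mu F y z))
         (Cmp D (Mu F x (Ten C y z)) (FA F (Asc C x y z)))) \<and>
    (\<forall>x\<in>Obj C.
       Cmp D (LU D (FO F x)) (Cmp D (TenA D (Eps F) (Idt D (FO F x))) (Mu F (Unt C) x)) =
         FA F (LU C x) \<and>
       Cmp D (RU D (FO F x)) (Cmp D (TenA D (Idt D (FO F x)) (Eps F)) (Mu F x (Unt C))) =
         FA F (RU C x)) \<and>
    (\<forall>x\<in>Obj C. \<forall>y\<in>Obj C.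
       Cmp D (Brd D (FO F x) (FO F y)) (Mu F x y) = Cmp D (Mu F y x) (FA F (Brd C x y)))"

definition mf_id :: "('a,'b) smc \<Rightarrow> ('a,'b,'a,'b) mfun" where
  "mf_id C = \<lparr> FO = (\<lambda>x. x), FA = (\<lambda>f. f), Mu = (\<lambda>x y. Idt C (Ten C x y)), Eps = Idt C (Unt C) \<rparr>"

definition mf_comp :: "('e,'f) smc \<Rightarrow> ('c,'d,'e,'f) mfun \<Rightarrow> ('a,'b,'c,'d) mfun \<Rightarrow> ('a,'b,'e,'f) mfun" where
  "mf_comp E G F = \<lparr> FO = (\<lambda>x. FO G (FO F x)), FA = (\<lambda>f. FA G (FA F f)),
     Mu = (\<lambda>x y. Cmp E (Mu G (FO F x) (FO F y)) (FA G (Mu F x y))),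
     Eps = Cmp E (Eps G) (FA G (Eps F)) \<rparr>"

text \<open>Opposite of a monoidal functor F : C -> D (as op C -> op D), D its target.\<close>
definition mf_op :: "('c,'d) smc \<Rightarrow> ('a,'b,'c,'d) mfun \<Rightarrow> ('a,'b,'c,'d) mfun" where
  "mf_op D F = F\<lparr> Mu := (\<lambda>x y. inv_ar D (Mu F x y)), Eps := inv_ar D (Eps F) \<rparr>"

definition monoidal_nat_trans ::
  "('a,'b) smc \<Rightarrow> ('c,'d) smc \<Rightarrow> ('a,'b,'c,'d) mfun \<Rightarrow> ('a,'b,'c,'d) mfun \<Rightarrow> ('a \<Rightarrow> 'd) \<Rightarrow> bool" where
  "monoidal_nat_trans C D F H \<tau> \<longleftrightarrow>
    (\<forall>x\<in>Obj C. \<tau> x \<in> hom D (FO F x) (FO H x)) \<and>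
    (\<forall>x y f. f \<in> hom C x y \<longrightarrow> Cmp D (\<tau> y) (FA F f) = Cmp D (FA H f) (\<tau> x)) \<and>
    (\<forall>x\<in>Obj C. \<forall>y\<in>Obj C.
       Cmp D (Mu H x y) (\<tau> (Ten C x y)) = Cmp D (TenA D (\<tau> x) (\<tau> y)) (Mu F x y)) \<and>
    Cmp D (Eps H) (\<tau> (Unt C)) = Eps F"

definition monoidal_nat_iso ::
  "('a,'b) smc \<Rightarrow> ('c,'d) smc \<Rightarrow> ('a,'b,'c,'d) mfun \<Rightarrow> ('a,'b,'c,'d) mfun \<Rightarrow> ('a \<Rightarrow> 'd) \<Rightarrow> bool" where
  "monoidal_nat_iso C D F H \<tau> \<longleftrightarrow> monoidal_nat_trans C D F H \<tau> \<and> (\<forall>x\<in>Obj C. iso D (\<tau> x))"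

text \<open>d : C -> C^op; a C^op structure map d(x*y) -> dx*dy is a C-arrow chi x y : dx*dy -> d(x*y).
  d^2 = d^op after d : C -> C.\<close>

definition dsq :: "('o,'m) smc \<Rightarrow> ('o,'m,'o,'m) mfun \<Rightarrow> ('o,'m,'o,'m) mfun" where
  "dsq C d = mf_comp C (mf_op (op_smc C) d) d"

definition sm_anti_involutive_cat ::
  "('o,'m) smc \<Rightarrow> ('o,'m,'o,'m) mfun \<Rightarrow> ('o \<Rightarrow> 'm) \<Rightarrow> bool" where
  "sm_anti_involutive_cat C d \<eta> \<longleftrightarrow>
    sym_monoidal_cat C \<and>
    sym_monoidal_functor C (op_smc C) d \<and>
    monoidal_nat_iso C C (mf_id C) (dsq C d) \<eta> \<and>
    (\<forall>x\<in>Obj C. Cmp C (FA d (\<eta> x)) (\<eta> (FO d x)) = Idt C (FO d x))"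

text \<open>phi x : G(d x) -> d(G x) in C2, i.e. a monoidal natural isomorphism between the
  functors d2 o G and G^op o d1 : C1 -> C2^op.\<close>

definition sm_anti_involutive_functor ::
  "('a,'b) smc \<Rightarrow> ('a,'b,'a,'b) mfun \<Rightarrow> ('a \<Rightarrow> 'b) \<Rightarrow>
   ('c,'d) smc \<Rightarrow> ('c,'d,'c,'d) mfun \<Rightarrow> ('c \<Rightarrow> 'd) \<Rightarrow>
   ('a,'b,'c,'d) mfun \<Rightarrow> ('a \<Rightarrow> 'd) \<Rightarrow> bool" where
  "sm_anti_involutive_functor C1 d1 \<eta>1 C2 d2 \<eta>2 G \<phi> \<longleftrightarrow>
    sym_monoidal_functor C1 C2 G \<and>
    monoidal_nat_iso C1 (op_smc C2) (mf_comp (op_smc C2) d2 G)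
       (mf_comp (op_smc C2) (mf_op C2 G) d1) \<phi> \<and>
    (\<forall>x\<in>Obj C1. Cmp C2 (\<phi> (FO d1 x)) (FA G (\<eta>1 x)) = Cmp C2 (FA d2 (\<phi> x)) (\<eta>2 (FO G x)))"

definition anti_involutive_nat_trans ::
  "('a,'b) smc \<Rightarrow> ('a,'b,'a,'b) mfun \<Rightarrow> ('c,'d) smc \<Rightarrow> ('c,'d,'c,'d) mfun \<Rightarrow>
   ('a \<Rightarrow> 'd) \<Rightarrow> ('a \<Rightarrow> 'd) \<Rightarrow> ('a \<Rightarrow> 'd) \<Rightarrow> bool" where
  "anti_involutive_nat_trans C1 d1 C2 d2 \<phi>1 \<phi>2 \<zeta> \<longleftrightarrow>
    (\<forall>x\<in>Obj C1. \<phi>1 x = Cmp C2 (FA d2 (\<zeta> x)) (Cmp C2 (\<phi>2 x) (\<zeta> (FO d1 x))))"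

definition hermitian_pairing ::
  "('o,'m) smc \<Rightarrow> ('o,'m,'o,'m) mfun \<Rightarrow> ('o \<Rightarrow> 'm) \<Rightarrow> 'o \<Rightarrow> 'm \<Rightarrow> bool" where
  "hermitian_pairing C d \<eta> c h \<longleftrightarrow>
    c \<in> Obj C \<and> h \<in> hom C c (FO d c) \<and> iso C h \<and> Cmp C (FA d h) (\<eta> c) = h"

definition positivity_structure ::
  "('o,'m) smc \<Rightarrow> ('o,'m,'o,'m) mfun \<Rightarrow> ('o \<Rightarrow> 'm) \<Rightarrow> ('o \<times> 'm) set \<Rightarrow> bool" where
  "positivity_structure C d \<eta> P \<longleftrightarrow>
    (\<forall>(c,h)\<in>P. hermitian_pairing C d \<eta> c h) \<and> fst ` P = Obj C"

definition monoidal_positivity_structure ::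
  "('o,'m) smc \<Rightarrow> ('o,'m,'o,'m) mfun \<Rightarrow> ('o \<Rightarrow> 'm) \<Rightarrow> ('o \<times> 'm) set \<Rightarrow> bool" where
  "monoidal_positivity_structure C d \<eta> P \<longleftrightarrow> positivity_structure C d \<eta> P \<and>
    (\<forall>(c1,h1)\<in>P. \<forall>(c2,h2)\<in>P. (Ten C c1 c2, Cmp C (Mu d c1 c2) (TenA C h1 h2)) \<in> P)"

inductive_set transfer_closure ::
  "('o,'m) smc \<Rightarrow> ('o,'m,'o,'m) mfun \<Rightarrow> ('o \<times> 'm) set \<Rightarrow> ('o \<times> 'm) set"
  for C d P where
  base: "p \<in> P \<Longrightarrow> p \<in> transfer_closure C d P"
| transfer: "(c, h) \<in> transfer_closure C d P \<Longrightarrow> g \<in> hom C c' c \<Longrightarrow> iso C g \<Longrightarrow>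
     (c', Cmp C (FA d g) (Cmp C h g)) \<in> transfer_closure C d P"

definition pairing_image ::
  "('c,'d) smc \<Rightarrow> ('a,'b,'c,'d) mfun \<Rightarrow> ('a \<Rightarrow> 'd) \<Rightarrow> ('a \<times> 'b) set \<Rightarrow> ('c \<times> 'd) set" where
  "pairing_image C2 G \<phi> P = (\<lambda>(c,h). (FO G c, Cmp C2 (\<phi> c) (FA G h))) ` P"

end

theory Submission
  imports Defs
begin

text \<open>For a pairing \<open>h : c \<rightarrow> dc\<close> write \<open>h\<^sub>i = \<phi>\<^sub>i(c) \<circ> G\<^sub>i(h)\<close> for its image under \<open>G\<^sub>i\<close>.
  Naturality of \<open>\<zeta>\<close> together with \<open>\<phi>\<^sub>1(c) = d(\<zeta>(c)) \<circ> \<phi>\<^sub>2(c) \<circ> \<zeta>(dc)\<close> shows that \<open>h\<^sub>1\<close>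
  is the transfer of \<open>h\<^sub>2\<close> along the isomorphism \<open>\<zeta>(c)\<close>. Transfer is functorial in the
  isomorphism, so transferring \<open>h\<^sub>1\<close> back along \<open>\<zeta>(c)\<^sup>-\<^sup>1\<close> recovers \<open>h\<^sub>2\<close>; hence each image
  lies in the transfer closure of the other.\<close>

lemma comp_in_hom:
  "category C \<Longrightarrow> f \<in> hom C x y \<Longrightarrow> g \<in> hom C y z \<Longrightarrow> Cmp C g f \<in> hom C x z"
  unfolding category_def hom_def by auto

lemma comp_assoc:
  "category C \<Longrightarrow> f \<in> hom C x y \<Longrightarrow> g \<in> hom C y z \<Longrightarrow> h \<in> hom C z w \<Longrightarrow>
   Cmp C h (Cmp C g f) = Cmp C (Cmp C h g) f"
  unfolding category_def hom_def by auto

lemma comp_id_left: "category C \<Longrightarrow> f \<in> hom C x y \<Longrightarrow> Cmp C (Idt C y) f = f"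
  unfolding category_def hom_def by auto

lemma comp_id_right: "category C \<Longrightarrow> f \<in> hom C x y \<Longrightarrow> Cmp C f (Idt C x) = f"
  unfolding category_def hom_def by auto

lemma is_inverse_unique:
  assumes C: "category C" and f: "f \<in> Arr C"
    and g: "is_inverse C f g" and g': "is_inverse C f g'"
  shows "g = g'"
proof -
  let ?x = "Src C f" and ?y = "Tgt C f"
  have fh: "f \<in> hom C ?x ?y" using f by (simp add: hom_def)
  have gh: "g \<in> hom C ?y ?x" and g'h: "g' \<in> hom C ?y ?x"
    using g g' by (auto simp: is_inverse_def)
  have "g = Cmp C g (Idt C ?y)" using comp_id_right[OF C gh] by simp
  also have "\<dots> = Cmp C g (Cmp C f g')" using g' by (simp add: is_inverse_def)
  also have "\<dots> = Cmp C (Cmp C g f) g'" using comp_assoc[OF C g'h fh gh] .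
  also have "\<dots> = Cmp C (Idt C ?x) g'" using g by (simp add: is_inverse_def)
  also have "\<dots> = g'" using comp_id_left[OF C g'h] .
  finally show ?thesis .
qed

lemma inv_ar_is_inverse:
  assumes "category C" "iso C f"
  shows "is_inverse C f (inv_ar C f)"
proof -
  obtain g where g: "is_inverse C f g" and f: "f \<in> Arr C" using assms(2) by (auto simp: iso_def)
  show ?thesis
    unfolding inv_ar_def using g by (rule theI) (use is_inverse_unique[OF assms(1) f g] in blast)
qed

lemma inv_ar_in_hom:
  "category C \<Longrightarrow> iso C f \<Longrightarrow> f \<in> hom C x y \<Longrightarrow> inv_ar C f \<in> hom C y x"
  using inv_ar_is_inverse[of C f] by (simp add: is_inverse_def hom_def)

lemma comp_inv_ar_right:
  "category C \<Longrightarrow> iso C f \<Longrightarrow> f \<in> hom C x y \<Longrightarrow> Cmp C f (inv_ar C f) = Idt C y"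
  using inv_ar_is_inverse[of C f] by (simp add: is_inverse_def hom_def)

lemma iso_inv_ar:
  assumes "category C" "iso C f" "f \<in> hom C x y"
  shows "iso C (inv_ar C f)"
proof -
  have "is_inverse C (inv_ar C f) f"
    using inv_ar_is_inverse[OF assms(1,2)] assms(3) by (auto simp: is_inverse_def hom_def)
  then show ?thesis
    using inv_ar_in_hom[OF assms] by (auto simp: iso_def hom_def)
qed

lemma op_smc_simps [simp]:
  "Obj (op_smc C) = Obj C" "Arr (op_smc C) = Arr C" "Idt (op_smc C) = Idt C"
  "Src (op_smc C) = Tgt C" "Tgt (op_smc C) = Src C" "Cmp (op_smc C) g f = Cmp C f g"
  by (simp_all add: op_smc_def)

lemma hom_op_smc [simp]: "hom (op_smc C) x y = hom C y x"
  by (auto simp: hom_def)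

lemma contravariant_in_hom:
  "is_functor C (op_smc C) d \<Longrightarrow> f \<in> hom C x y \<Longrightarrow> FA d f \<in> hom C (FO d y) (FO d x)"
  by (simp add: is_functor_def)

lemma contravariant_comp:
  assumes d: "is_functor C (op_smc C) d" and f: "f \<in> hom C x y" and g: "g \<in> hom C y z"
  shows "FA d (Cmp C g f) = Cmp C (FA d f) (FA d g)"
proof -
  have "\<forall>f g. f \<in> Arr C \<and> g \<in> Arr C \<and> Tgt C f = Src C g \<longrightarrow>
      FA d (Cmp C g f) = Cmp (op_smc C) (FA d g) (FA d f)"
    using d unfolding is_functor_def by (elim conjE) assumption
  moreover have "f \<in> Arr C" "g \<in> Arr C" "Tgt C f = Src C g" using f g by (simp_all add: hom_def)
  ultimately show ?thesis by simp
qed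

lemma contravariant_id:
  "is_functor C (op_smc C) d \<Longrightarrow> x \<in> Obj C \<Longrightarrow> FA d (Idt C x) = Idt C (FO d x)"
  by (simp add: is_functor_def)

definition transfer :: "('o,'m) smc \<Rightarrow> ('o,'m,'o,'m) mfun \<Rightarrow> 'm \<Rightarrow> 'm \<Rightarrow> 'm" where
  "transfer C d h g = Cmp C (FA d g) (Cmp C h g)"

definition is_transfer ::
  "('o,'m) smc \<Rightarrow> ('o,'m,'o,'m) mfun \<Rightarrow> 'o \<times> 'm \<Rightarrow> 'o \<times> 'm \<Rightarrow> bool" where
  "is_transfer C d p q \<longleftrightarrow>
     (\<exists>g. g \<in> hom C (fst p) (fst q) \<and> iso C g \<and> snd p = transfer C d (snd q) g)"

lemma transfer_comp:
  assumes C: "category C" and d: "is_functor C (op_smc C) d"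
    and h: "h \<in> hom C c (FO d c)" and g: "g \<in> hom C c' c" and k: "k \<in> hom C c'' c'"
  shows "transfer C d (transfer C d h g) k = transfer C d h (Cmp C g k)"
proof -
  note dg = contravariant_in_hom[OF d g] and dk = contravariant_in_hom[OF d k]
  have hg: "Cmp C h g \<in> hom C c' (FO d c)" using comp_in_hom[OF C g h] .
  have "transfer C d (transfer C d h g) k = Cmp C (FA d k) (Cmp C (Cmp C (FA d g) (Cmp C h g)) k)"
    by (simp add: transfer_def)
  also have "\<dots> = Cmp C (FA d k) (Cmp C (FA d g) (Cmp C (Cmp C h g) k))"
    using comp_assoc[OF C k hg dg] by simp
  also have "\<dots> = Cmp C (Cmp C (FA d k) (FA d g)) (Cmp C (Cmp C h g) k)"
    using comp_assoc[OF C comp_in_hom[OF C k hg] dg dk] .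
  also have "\<dots> = Cmp C (FA d (Cmp C g k)) (Cmp C h (Cmp C g k))"
    using contravariant_comp[OF d k g] comp_assoc[OF C k g h] by simp
  finally show ?thesis by (simp add: transfer_def)
qed

lemma transfer_id:
  assumes "category C" "is_functor C (op_smc C) d" "h \<in> hom C c (FO d c)"
  shows "transfer C d h (Idt C c) = h"
proof -
  have c: "c \<in> Obj C" using assms(1,3) by (auto simp: category_def hom_def)
  show ?thesis
    using comp_id_right[OF assms(1,3)] comp_id_left[OF assms(1,3)] contravariant_id[OF assms(2) c]
    by (simp add: transfer_def)
qed

lemma is_transfer_sym:
  assumes C: "category C" and d: "is_functor C (op_smc C) d"
    and h: "h \<in> hom C c (FO d c)" and p: "is_transfer C d (c', h') (c, h)"
  shows "is_transfer C d (c, h) (c', h')"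
proof -
  from p obtain g where g: "g \<in> hom C c' c" "iso C g" and h': "h' = transfer C d h g"
    by (auto simp: is_transfer_def)
  let ?g' = "inv_ar C g"
  have g': "?g' \<in> hom C c c'" "iso C ?g'"
    using inv_ar_in_hom[OF C g(2,1)] iso_inv_ar[OF C g(2,1)] by auto
  have "transfer C d h' ?g' = transfer C d h (Cmp C g ?g')"
    using transfer_comp[OF C d h g(1) g'(1)] h' by simp
  also have "\<dots> = h"
    using comp_inv_ar_right[OF C g(2,1)] transfer_id[OF C d h] by simp
  finally show ?thesis using g' by (auto simp: is_transfer_def)
qed

lemma transfer_closure_minimal:
  assumes "A \<subseteq> transfer_closure C d B"
  shows "transfer_closure C d A \<subseteq> transfer_closure C d B"
proof
  fix p assume "p \<in> transfer_closure C d A"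
  then show "p \<in> transfer_closure C d B"
    by induction (use assms in \<open>auto intro: transfer_closure.transfer\<close>)
qed

lemma is_transfer_in_transfer_closure:
  assumes "is_transfer C d p q" "q \<in> B"
  shows "p \<in> transfer_closure C d B"
proof -
  obtain c h c' h' where pq: "p = (c', h')" "q = (c, h)" by fastforce
  with assms obtain g where "g \<in> hom C c' c" "iso C g" "h' = Cmp C (FA d g) (Cmp C h g)"
    by (auto simp: is_transfer_def transfer_def)
  then show ?thesis
    using transfer_closure.transfer[OF transfer_closure.base[OF assms(2)[unfolded pq]]] pq
    by simp
qed

lemma transfer_closure_subsetI:
  assumes "\<forall>p\<in>A. \<exists>q\<in>B. is_transfer C d p q"
  shows "transfer_closure C d A \<subseteq> transfer_closure C d B"
proof (rule transfer_closure_minimal, rule subsetI)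
  fix p assume "p \<in> A"
  with assms obtain q where "is_transfer C d p q" "q \<in> B" by blast
  then show "p \<in> transfer_closure C d B" by (rule is_transfer_in_transfer_closure)
qed

lemma transfer_closure_eqI:
  assumes C: "category C" and d: "is_functor C (op_smc C) d"
    and AB: "\<forall>p\<in>A. \<exists>q\<in>B. is_transfer C d p q"
    and BA: "\<forall>q\<in>B. \<exists>p\<in>A. is_transfer C d p q"
    and B_hom: "\<forall>(c, h)\<in>B. h \<in> hom C c (FO d c)"
  shows "transfer_closure C d A = transfer_closure C d B"
proof
  show "transfer_closure C d A \<subseteq> transfer_closure C d B"
    using AB by (rule transfer_closure_subsetI)
  have "\<exists>p\<in>A. is_transfer C d q p" if q: "q \<in> B" for q
  proof -
    obtain c h where q_eq: "q = (c, h)" by fastforce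
    from BA q obtain c' h' where p: "(c', h') \<in> A" "is_transfer C d (c', h') (c, h)"
      unfolding q_eq by fastforce
    have "h \<in> hom C c (FO d c)" using B_hom q unfolding q_eq by auto
    from is_transfer_sym[OF C d this p(2)] p(1) show ?thesis unfolding q_eq by blast
  qed
  then show "transfer_closure C d B \<subseteq> transfer_closure C d A"
    by (intro transfer_closure_subsetI ballI)
qed

definition nat_trans ::
  "('a,'b) smc \<Rightarrow> ('c,'d) smc \<Rightarrow> ('a,'b,'c,'d) mfun \<Rightarrow> ('a,'b,'c,'d) mfun \<Rightarrow> ('a \<Rightarrow> 'd) \<Rightarrow> bool" where
  "nat_trans C D F H \<tau> \<longleftrightarrow>
    (\<forall>x\<in>Obj C. \<tau> x \<in> hom D (FO F x) (FO H x)) \<and>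
    (\<forall>x y f. f \<in> hom C x y \<longrightarrow> Cmp D (\<tau> y) (FA F f) = Cmp D (FA H f) (\<tau> x))"

lemma monoidal_nat_trans_imp_nat_trans: "monoidal_nat_trans C D F H \<tau> \<Longrightarrow> nat_trans C D F H \<tau>"
  by (simp add: monoidal_nat_trans_def nat_trans_def)

lemma anti_involutive_image_eq_transfer:
  assumes C1: "category C1" and C2: "category C2" and d2: "is_functor C2 (op_smc C2) d2"
    and G1: "is_functor C1 C2 G1" and G2: "is_functor C1 C2 G2"
    and \<zeta>: "nat_trans C1 C2 G1 G2 \<zeta>" and \<phi>: "anti_involutive_nat_trans C1 d1 C2 d2 \<phi>1 \<phi>2 \<zeta>"
    and \<phi>2: "\<phi>2 c \<in> hom C2 (FO G2 (FO d1 c)) (FO d2 (FO G2 c))"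
    and h: "h \<in> hom C1 c (FO d1 c)"
  shows "Cmp C2 (\<phi>1 c) (FA G1 h) = transfer C2 d2 (Cmp C2 (\<phi>2 c) (FA G2 h)) (\<zeta> c)"
proof -
  have c: "c \<in> Obj C1" and dc: "FO d1 c \<in> Obj C1" using C1 h by (auto simp: category_def hom_def)
  have \<zeta>c: "\<zeta> c \<in> hom C2 (FO G1 c) (FO G2 c)"
    and \<zeta>dc: "\<zeta> (FO d1 c) \<in> hom C2 (FO G1 (FO d1 c)) (FO G2 (FO d1 c))"
    and natural: "Cmp C2 (\<zeta> (FO d1 c)) (FA G1 h) = Cmp C2 (FA G2 h) (\<zeta> c)"
    using \<zeta> c dc h by (auto simp: nat_trans_def)
  have G1h: "FA G1 h \<in> hom C2 (FO G1 c) (FO G1 (FO d1 c))"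
    and G2h: "FA G2 h \<in> hom C2 (FO G2 c) (FO G2 (FO d1 c))"
    using G1 G2 h by (simp_all add: is_functor_def)
  note d\<zeta> = contravariant_in_hom[OF d2 \<zeta>c]
  have "transfer C2 d2 (Cmp C2 (\<phi>2 c) (FA G2 h)) (\<zeta> c)
      = Cmp C2 (FA d2 (\<zeta> c)) (Cmp C2 (\<phi>2 c) (Cmp C2 (FA G2 h) (\<zeta> c)))"
    using comp_assoc[OF C2 \<zeta>c G2h \<phi>2] by (simp add: transfer_def)
  also have "\<dots> = Cmp C2 (FA d2 (\<zeta> c)) (Cmp C2 (Cmp C2 (\<phi>2 c) (\<zeta> (FO d1 c))) (FA G1 h))"
    using natural comp_assoc[OF C2 G1h \<zeta>dc \<phi>2] by simp
  also have "\<dots> = Cmp C2 (Cmp C2 (FA d2 (\<zeta> c)) (Cmp C2 (\<phi>2 c) (\<zeta> (FO d1 c)))) (FA G1 h)"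
    using comp_assoc[OF C2 G1h comp_in_hom[OF C2 \<zeta>dc \<phi>2] d\<zeta>] .
  also have "\<dots> = Cmp C2 (\<phi>1 c) (FA G1 h)"
    using \<phi> c by (simp add: anti_involutive_nat_trans_def)
  finally show ?thesis by simp
qed

lemma sm_anti_involutive_cat_contravariant:
  "sm_anti_involutive_cat C d \<eta> \<Longrightarrow> category C \<and> is_functor C (op_smc C) d"
  by (simp add: sm_anti_involutive_cat_def sym_monoidal_cat_def sym_monoidal_functor_def)

lemma sm_anti_involutive_functor_phi_in_hom:
  "sm_anti_involutive_functor C1 d1 \<eta>1 C2 d2 \<eta>2 G \<phi> \<Longrightarrow> x \<in> Obj C1 \<Longrightarrow>
   \<phi> x \<in> hom C2 (FO G (FO d1 x)) (FO d2 (FO G x))"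
  by (simp add: sm_anti_involutive_functor_def monoidal_nat_iso_def monoidal_nat_trans_def
      mf_comp_def mf_op_def)

theorem mainTheorem14:
  fixes C1 :: "('a,'b) smc" and d1 :: "('a,'b,'a,'b) mfun" and \<eta>1 :: "'a \<Rightarrow> 'b"
    and C2 :: "('c,'d) smc" and d2 :: "('c,'d,'c,'d) mfun" and \<eta>2 :: "'c \<Rightarrow> 'd"
    and G1 G2 :: "('a,'b,'c,'d) mfun" and \<phi>1 \<phi>2 \<zeta> :: "'a \<Rightarrow> 'd"
    and P1 :: "('a \<times> 'b) set"
  assumes "sm_anti_involutive_cat C1 d1 \<eta>1"
    and "sm_anti_involutive_cat C2 d2 \<eta>2"
    and "monoidal_positivity_structure C1 d1 \<eta>1 P1"
    and "sm_anti_involutive_functor C1 d1 \<eta>1 C2 d2 \<eta>2 G1 \<phi>1"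
    and "sm_anti_involutive_functor C1 d1 \<eta>1 C2 d2 \<eta>2 G2 \<phi>2"
    and "monoidal_nat_iso C1 C2 G1 G2 \<zeta>"
    and "anti_involutive_nat_trans C1 d1 C2 d2 \<phi>1 \<phi>2 \<zeta>"
  shows "transfer_closure C2 d2 (pairing_image C2 G1 \<phi>1 P1) =
         transfer_closure C2 d2 (pairing_image C2 G2 \<phi>2 P1)"
proof -
  have C1: "category C1" and C2: "category C2" and d2: "is_functor C2 (op_smc C2) d2"
    using sm_anti_involutive_cat_contravariant[OF assms(1)]
      sm_anti_involutive_cat_contravariant[OF assms(2)] by simp_all
  have G1: "is_functor C1 C2 G1" and G2: "is_functor C1 C2 G2"
    using assms(4,5) by (simp_all add: sm_anti_involutive_functor_def sym_monoidal_functor_def)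
  have \<zeta>: "nat_trans C1 C2 G1 G2 \<zeta>" and \<zeta>_iso: "\<forall>x\<in>Obj C1. iso C2 (\<zeta> x)"
    using assms(6) monoidal_nat_trans_imp_nat_trans by (auto simp: monoidal_nat_iso_def)
  have P1_hom: "c \<in> Obj C1 \<and> h \<in> hom C1 c (FO d1 c)" if "(c, h) \<in> P1" for c h
    using assms(3) that by (auto simp: monoidal_positivity_structure_def
        positivity_structure_def hermitian_pairing_def)
  note \<phi>2 = sm_anti_involutive_functor_phi_in_hom[OF assms(5)]
  have image_is_transfer: "is_transfer C2 d2 (FO G1 c, Cmp C2 (\<phi>1 c) (FA G1 h))
      (FO G2 c, Cmp C2 (\<phi>2 c) (FA G2 h))" if "(c, h) \<in> P1" for c h
    using anti_involutive_image_eq_transfer[OF C1 C2 d2 G1 G2 \<zeta> assms(7) \<phi>2] P1_hom[OF that]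
      \<zeta> \<zeta>_iso by (auto simp: is_transfer_def nat_trans_def)
  have image_in_hom: "Cmp C2 (\<phi>2 c) (FA G2 h) \<in> hom C2 (FO G2 c) (FO d2 (FO G2 c))"
    if "(c, h) \<in> P1" for c h
    using comp_in_hom[OF C2 _ \<phi>2] P1_hom[OF that] G2 by (auto simp: is_functor_def)
  show ?thesis
    by (rule transfer_closure_eqI[OF C2 d2])
      (use image_is_transfer image_in_hom in \<open>force simp: pairing_image_def\<close>)+
qed

end
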